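(* Let $e_1,\dots,e_m$ be domains, in each of which a random pair $(X,Y)$ with $X\in\mathbb{R}^d$ is observed, and assume: (i) $Y$ is generated from a linear structural equation model $Y=\beta^\intercal X+N$ with coefficients $\beta\in\mathbb{R}^d$ and noise $N$ with finite second moment; (ii) predictors are linear, $x\mapsto\hat\beta^\intercal x$ with $\hat\beta\in\mathbb{R}^d$; (iii) the loss is squared error, so the risk in domain $e_i$ is $\mathcal{R}^{e_i}(\hat\beta)=\mathbb{E}_{e_i}[(Y-\hat\beta^\intercal X)^2]$; (iv) the risk $\mathbb{E}_{e_i}[(Y-\beta^\intercal X)^2]$ of the causal predictor $\beta$ is the same for all $i=1,\dots,m$; (v) in every domain $e_i$ the covariates and the noise are centered, $\mathbb{E}_{e_i}[X]=0$ and $\mathbb{E}_{e_i}[N]=0$, and the system of equations in $x\in\mathbb{R}^d$ $$0\ge x^\intercal\mathrm{Cov}_{e_1}(X,X)x+2x^\intercal\mathrm{Cov}_{e_1}(X,N)=\cdots=x^\intercal\mathrm{Cov}_{e_m}(X,X)x+2x^\intercal\mathrm{Cov}_{e_m}(X,N)$$ has the unique solution $x=0$. If $\hat\beta$ is a minimal invariant-risk predictor, then $\hat\beta=\beta$.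
   Context: A linear predictor $\hat\beta$ is an invariant-risk predictor if $\mathcal{R}^{e_1}(\hat\beta)=\cdots=\mathcal{R}^{e_m}(\hat\beta)$; it is a minimal invariant-risk predictor if it is an invariant-risk predictor whose (common) risk is minimal among all invariant-risk linear predictors. $\mathrm{Cov}_{e_i}$ denotes covariance under the distribution of domain $e_i$. *)

theory Defs
  imports "HOL-Probability.Probability"
begin

definition risk :: "'a measure \<Rightarrow> ('a \<Rightarrow> real^'d) \<Rightarrow> ('a \<Rightarrow> real) \<Rightarrow> real^'d \<Rightarrow> real" where
  "risk M X Y b = integral\<^sup>L M (\<lambda>\<omega>. (Y \<omega> - b \<bullet> X \<omega>)\<^sup>2)"

definition cov :: "'a measure \<Rightarrow> ('a \<Rightarrow> real) \<Rightarrow> ('a \<Rightarrow> real) \<Rightarrow> real" where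
  "cov M U V = integral\<^sup>L M (\<lambda>\<omega>. U \<omega> * V \<omega>) - integral\<^sup>L M U * integral\<^sup>L M V"

definition cov_mat :: "'a measure \<Rightarrow> ('a \<Rightarrow> real^'d) \<Rightarrow> real^'d^'d" where
  "cov_mat M X = (\<chi> j k. cov M (\<lambda>\<omega>. X \<omega> $ j) (\<lambda>\<omega>. X \<omega> $ k))"

definition cov_vec :: "'a measure \<Rightarrow> ('a \<Rightarrow> real^'d) \<Rightarrow> ('a \<Rightarrow> real) \<Rightarrow> real^'d" where
  "cov_vec M X N = (\<chi> j. cov M (\<lambda>\<omega>. X \<omega> $ j) N)"

text \<open>Domains are indexed by i < m.\<close>
definition invariant_risk ::
  "nat \<Rightarrow> (nat \<Rightarrow> 'a measure) \<Rightarrow> (nat \<Rightarrow> 'a \<Rightarrow> real^'d) \<Rightarrow> (nat \<Rightarrow> 'a \<Rightarrow> real) \<Rightarrow> real^'d \<Rightarrow> bool" where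
  "invariant_risk m M X Y b \<longleftrightarrow>
     (\<forall>i<m. \<forall>j<m. risk (M i) (X i) (Y i) b = risk (M j) (X j) (Y j) b)"

definition minimal_invariant_risk ::
  "nat \<Rightarrow> (nat \<Rightarrow> 'a measure) \<Rightarrow> (nat \<Rightarrow> 'a \<Rightarrow> real^'d) \<Rightarrow> (nat \<Rightarrow> 'a \<Rightarrow> real) \<Rightarrow> real^'d \<Rightarrow> bool" where
  "minimal_invariant_risk m M X Y b \<longleftrightarrow>
     invariant_risk m M X Y b \<and>
     (\<forall>b'. invariant_risk m M X Y b' \<longrightarrow>
        risk (M 0) (X 0) (Y 0) b \<le> risk (M 0) (X 0) (Y 0) b')"

end

theory Submission
  imports Defs
begin

text \<open>
  Under the structural equation with centered X and N, the risk of b in domain e is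
  R_e(\<beta>) + q_e(\<beta> - b), with the risk gap q_e(x) = x' Cov_e(X,X) x + 2 x' Cov_e(X,N).
  The causal predictor has invariant risk, so minimality of bhat gives q_e1(\<beta> - bhat) \<le> 0,
  and invariance of both risks makes q_e(\<beta> - bhat) independent of e; the uniqueness
  hypothesis then forces \<beta> - bhat = 0.
\<close>

lemma borel_measurable_vec_nth[measurable (raw)]:
  fixes X :: "'a \<Rightarrow> real^'d"
  assumes "X \<in> borel_measurable M"
  shows "(\<lambda>\<omega>. X \<omega> $ j) \<in> borel_measurable M"
proof -
  have "(\<lambda>\<omega>. X \<omega> \<bullet> axis j 1) \<in> borel_measurable M"
    using assms by measurable
  then show ?thesis
    by (simp add: inner_axis)
qed

lemma cov_commute: "cov M U V = cov M V U"
  by (simp add: cov_def mult.commute)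

lemma cov_sum_left:
  assumes "finite J"
    and "\<And>j. j \<in> J \<Longrightarrow> integrable M (U j)" and "integrable M V"
    and "\<And>j. j \<in> J \<Longrightarrow> integrable M (\<lambda>\<omega>. U j \<omega> * V \<omega>)"
  shows "cov M (\<lambda>\<omega>. \<Sum>j\<in>J. c j * U j \<omega>) V = (\<Sum>j\<in>J. c j * cov M (U j) V)"
  using assms
  by (simp add: cov_def integral_sum sum_distrib_left sum_distrib_right sum_subtractf
      right_diff_distrib mult.assoc)

lemma integrable_mult_of_square_integrable:
  fixes U V :: "'a \<Rightarrow> real"
  assumes [measurable]: "U \<in> borel_measurable M" "V \<in> borel_measurable M"
    and "integrable M (\<lambda>\<omega>. (U \<omega>)\<^sup>2)" "integrable M (\<lambda>\<omega>. (V \<omega>)\<^sup>2)"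
  shows "integrable M (\<lambda>\<omega>. U \<omega> * V \<omega>)"
proof (rule Bochner_Integration.integrable_bound)
  show "integrable M (\<lambda>\<omega>. (U \<omega>)\<^sup>2 + (V \<omega>)\<^sup>2)"
    using assms(3,4) by simp
  have "\<bar>u * v\<bar> \<le> u\<^sup>2 + v\<^sup>2" for u v :: real
    using sum_squares_bound[of "\<bar>u\<bar>" "\<bar>v\<bar>"] mult_nonneg_nonneg[OF abs_ge_zero abs_ge_zero, of u v]
    unfolding abs_mult power2_abs by linarith
  then show "AE \<omega> in M. norm (U \<omega> * V \<omega>) \<le> norm ((U \<omega>)\<^sup>2 + (V \<omega>)\<^sup>2)"
    by simp
qed simp

lemma integrable_square_bound:
  fixes f :: "'a \<Rightarrow> real" and g :: "'a \<Rightarrow> 'b::real_normed_vector"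
  assumes [measurable]: "f \<in> borel_measurable M"
    and "integrable M (\<lambda>\<omega>. (norm (g \<omega>))\<^sup>2)" and "\<And>\<omega>. \<bar>f \<omega>\<bar> \<le> c * norm (g \<omega>)"
  shows "integrable M (\<lambda>\<omega>. (f \<omega>)\<^sup>2)"
proof (rule Bochner_Integration.integrable_bound)
  show "integrable M (\<lambda>\<omega>. c\<^sup>2 * (norm (g \<omega>))\<^sup>2)"
    using assms(2) by simp
  have "(f \<omega>)\<^sup>2 \<le> (c * norm (g \<omega>))\<^sup>2" for \<omega>
    using power_mono[OF assms(3)[of \<omega>] abs_ge_zero, of 2] by simp
  then show "AE \<omega> in M. norm ((f \<omega>)\<^sup>2) \<le> norm (c\<^sup>2 * (norm (g \<omega>))\<^sup>2)"
    by (simp add: power_mult_distrib)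
qed simp

definition risk_gap :: "'a measure \<Rightarrow> ('a \<Rightarrow> real^'d) \<Rightarrow> ('a \<Rightarrow> real) \<Rightarrow> real^'d \<Rightarrow> real" where
  "risk_gap M X N x = x \<bullet> (cov_mat M X *v x) + 2 * (x \<bullet> cov_vec M X N)"

context finite_measure
begin

lemma square_integrable_component:
  fixes X :: "'a \<Rightarrow> real^'d"
  assumes [measurable]: "X \<in> borel_measurable M"
    and "integrable M (\<lambda>\<omega>. (norm (X \<omega>))\<^sup>2)"
  shows "integrable M (\<lambda>\<omega>. (X \<omega> $ j)\<^sup>2)"
  by (rule integrable_square_bound[OF _ assms(2), where c = 1]) (measurable, simp add: component_le_norm_cart)

lemma square_integrable_inner:
  fixes X :: "'a \<Rightarrow> real^'d"
  assumes [measurable]: "X \<in> borel_measurable M"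
    and "integrable M (\<lambda>\<omega>. (norm (X \<omega>))\<^sup>2)"
  shows "integrable M (\<lambda>\<omega>. (x \<bullet> X \<omega>)\<^sup>2)"
  by (rule integrable_square_bound[OF _ assms(2), where c = "norm x"]) (measurable, rule Cauchy_Schwarz_ineq2)

lemma inner_cov_vec:
  fixes X :: "'a \<Rightarrow> real^'d"
  assumes [measurable]: "X \<in> borel_measurable M" "N \<in> borel_measurable M"
    and X_sq: "integrable M (\<lambda>\<omega>. (norm (X \<omega>))\<^sup>2)"
    and N_sq: "integrable M (\<lambda>\<omega>. (N \<omega>)\<^sup>2)"
  shows "x \<bullet> cov_vec M X N = cov M (\<lambda>\<omega>. x \<bullet> X \<omega>) N"
proof -
  have "cov M (\<lambda>\<omega>. \<Sum>j\<in>UNIV. x $ j * X \<omega> $ j) N = (\<Sum>j\<in>UNIV. x $ j * cov M (\<lambda>\<omega>. X \<omega> $ j) N)"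
    using square_integrable_component[OF _ X_sq] N_sq
    by (intro cov_sum_left)
      (auto intro: square_integrable_imp_integrable integrable_mult_of_square_integrable)
  then show ?thesis
    by (simp add: cov_vec_def inner_vec_def)
qed

lemma cov_mat_mult_eq_cov_vec:
  fixes X :: "'a \<Rightarrow> real^'d"
  assumes [measurable]: "X \<in> borel_measurable M"
    and X_sq: "integrable M (\<lambda>\<omega>. (norm (X \<omega>))\<^sup>2)"
  shows "cov_mat M X *v x = cov_vec M X (\<lambda>\<omega>. x \<bullet> X \<omega>)"
proof -
  have "cov M (\<lambda>\<omega>. x \<bullet> X \<omega>) (\<lambda>\<omega>. X \<omega> $ j) = (\<Sum>k\<in>UNIV. x $ k * cov M (\<lambda>\<omega>. X \<omega> $ k) (\<lambda>\<omega>. X \<omega> $ j))" for j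
    using inner_cov_vec[OF _ _ X_sq square_integrable_component[OF _ X_sq]]
    by (simp add: cov_vec_def inner_vec_def)
  then show ?thesis
    by (simp add: cov_mat_def cov_vec_def matrix_vector_mult_def vec_eq_iff cov_commute mult.commute)
qed

lemma quadratic_form_cov_mat:
  fixes X :: "'a \<Rightarrow> real^'d"
  assumes [measurable]: "X \<in> borel_measurable M"
    and X_sq: "integrable M (\<lambda>\<omega>. (norm (X \<omega>))\<^sup>2)"
  shows "x \<bullet> (cov_mat M X *v x) = cov M (\<lambda>\<omega>. x \<bullet> X \<omega>) (\<lambda>\<omega>. x \<bullet> X \<omega>)"
  unfolding cov_mat_mult_eq_cov_vec[OF assms]
  using square_integrable_inner[OF _ X_sq] by (intro inner_cov_vec) (auto simp: X_sq)

lemma risk_eq_causal_risk_plus_gap: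
  fixes X :: "'a \<Rightarrow> real^'d"
  assumes X_meas[measurable]: "X \<in> borel_measurable M"
    and N_meas[measurable]: "N \<in> borel_measurable M"
    and X_sq: "integrable M (\<lambda>\<omega>. (norm (X \<omega>))\<^sup>2)"
    and N_sq: "integrable M (\<lambda>\<omega>. (N \<omega>)\<^sup>2)"
    and X_centered: "integral\<^sup>L M X = 0" and N_centered: "integral\<^sup>L M N = 0"
    and SEM: "\<And>\<omega>. \<omega> \<in> space M \<Longrightarrow> Y \<omega> = \<beta> \<bullet> X \<omega> + N \<omega>"
  shows "risk M X Y b = risk M X Y \<beta> + risk_gap M X N (\<beta> - b)"
proof -
  define x where "x = \<beta> - b"
  have "integrable M (\<lambda>\<omega>. norm (X \<omega>))"
    by (rule square_integrable_imp_integrable[OF _ X_sq]) measurable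
  then have "integrable M X"
    by (rule integrable_norm_cancel) simp
  then have xX_centered: "integral\<^sup>L M (\<lambda>\<omega>. x \<bullet> X \<omega>) = 0"
    by (simp add: X_centered)
  have xX_sq: "integrable M (\<lambda>\<omega>. (x \<bullet> X \<omega>)\<^sup>2)"
    by (rule square_integrable_inner[OF X_meas X_sq])
  have xXN: "integrable M (\<lambda>\<omega>. (x \<bullet> X \<omega>) * N \<omega>)"
    by (rule integrable_mult_of_square_integrable[OF _ _ xX_sq N_sq]) measurable
  have "Y \<omega> - b \<bullet> X \<omega> = x \<bullet> X \<omega> + N \<omega>" if "\<omega> \<in> space M" for \<omega>
    using SEM[OF that] by (simp add: x_def inner_diff_left)
  then have "risk M X Y b = integral\<^sup>L M (\<lambda>\<omega>. (x \<bullet> X \<omega>)\<^sup>2 + 2 * ((x \<bullet> X \<omega>) * N \<omega>) + (N \<omega>)\<^sup>2)"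
    unfolding risk_def by (intro Bochner_Integration.integral_cong refl) (simp add: power2_sum)
  also have "\<dots> = integral\<^sup>L M (\<lambda>\<omega>. (N \<omega>)\<^sup>2)
      + (integral\<^sup>L M (\<lambda>\<omega>. (x \<bullet> X \<omega>)\<^sup>2) + 2 * integral\<^sup>L M (\<lambda>\<omega>. (x \<bullet> X \<omega>) * N \<omega>))"
    using xX_sq xXN N_sq by simp
  also have "integral\<^sup>L M (\<lambda>\<omega>. (N \<omega>)\<^sup>2) = risk M X Y \<beta>"
    unfolding risk_def by (intro Bochner_Integration.integral_cong refl) (simp add: SEM)
  also have "integral\<^sup>L M (\<lambda>\<omega>. (x \<bullet> X \<omega>)\<^sup>2) + 2 * integral\<^sup>L M (\<lambda>\<omega>. (x \<bullet> X \<omega>) * N \<omega>)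
      = risk_gap M X N x"
  proof -
    have "x \<bullet> (cov_mat M X *v x) = integral\<^sup>L M (\<lambda>\<omega>. (x \<bullet> X \<omega>)\<^sup>2)"
      unfolding quadratic_form_cov_mat[OF X_meas X_sq] cov_def xX_centered
      by (simp add: power2_eq_square)
    moreover have "x \<bullet> cov_vec M X N = integral\<^sup>L M (\<lambda>\<omega>. (x \<bullet> X \<omega>) * N \<omega>)"
      unfolding inner_cov_vec[OF X_meas N_meas X_sq N_sq] cov_def xX_centered
      by simp
    ultimately show ?thesis
      by (simp add: risk_gap_def)
  qed
  finally show ?thesis
    by (simp add: x_def)
qed

end

theorem theorem4p3:
  fixes m :: nat
    and M :: "nat \<Rightarrow> 'a measure"
    and X :: "nat \<Rightarrow> 'a \<Rightarrow> real^'d"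
    and N :: "nat \<Rightarrow> 'a \<Rightarrow> real"
    and Y :: "nat \<Rightarrow> 'a \<Rightarrow> real"
    and \<beta> bhat :: "real^'d"
  assumes m: "m \<ge> 1"
    and prob: "\<And>i. i < m \<Longrightarrow> prob_space (M i)"
    and X_meas: "\<And>i. i < m \<Longrightarrow> X i \<in> borel_measurable (M i)"
    and X_sq: "\<And>i. i < m \<Longrightarrow> integrable (M i) (\<lambda>\<omega>. (norm (X i \<omega>))\<^sup>2)"
    and N_meas: "\<And>i. i < m \<Longrightarrow> N i \<in> borel_measurable (M i)"
    and N_sq: "\<And>i. i < m \<Longrightarrow> integrable (M i) (\<lambda>\<omega>. (N i \<omega>)\<^sup>2)"
    and SEM: "\<And>i \<omega>. i < m \<Longrightarrow> \<omega> \<in> space (M i) \<Longrightarrow> Y i \<omega> = \<beta> \<bullet> X i \<omega> + N i \<omega>"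
    and causal_inv: "\<And>i j. i < m \<Longrightarrow> j < m \<Longrightarrow>
        risk (M i) (X i) (Y i) \<beta> = risk (M j) (X j) (Y j) \<beta>"
    and X_centered: "\<And>i. i < m \<Longrightarrow> integral\<^sup>L (M i) (X i) = 0"
    and N_centered: "\<And>i. i < m \<Longrightarrow> integral\<^sup>L (M i) (N i) = 0"
    and unique: "\<And>x. \<lbrakk> 0 \<ge> x \<bullet> (cov_mat (M 0) (X 0) *v x) + 2 * (x \<bullet> cov_vec (M 0) (X 0) (N 0));
                        \<forall>i<m. x \<bullet> (cov_mat (M i) (X i) *v x) + 2 * (x \<bullet> cov_vec (M i) (X i) (N i))
                             = x \<bullet> (cov_mat (M 0) (X 0) *v x) + 2 * (x \<bullet> cov_vec (M 0) (X 0) (N 0)) \<rbrakk>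
                      \<Longrightarrow> x = 0"
    and minimal: "minimal_invariant_risk m M X Y bhat"
  shows "bhat = \<beta>"
proof -
  have risk_eq: "risk (M i) (X i) (Y i) b = risk (M i) (X i) (Y i) \<beta> + risk_gap (M i) (X i) (N i) (\<beta> - b)"
    if "i < m" for i b
    using prob_space.finite_measure[OF prob[OF that]] X_meas[OF that] N_meas[OF that]
      X_sq[OF that] N_sq[OF that] X_centered[OF that] N_centered[OF that] SEM[OF that]
    by (rule finite_measure.risk_eq_causal_risk_plus_gap)
  have "0 < m"
    using m by simp
  have bhat_inv: "invariant_risk m M X Y bhat"
    using minimal unfolding minimal_invariant_risk_def by blast
  have "invariant_risk m M X Y \<beta>"
    using causal_inv unfolding invariant_risk_def by blast
  then have "risk (M 0) (X 0) (Y 0) bhat \<le> risk (M 0) (X 0) (Y 0) \<beta>"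
    using minimal unfolding minimal_invariant_risk_def by blast
  then have gap_nonpos: "risk_gap (M 0) (X 0) (N 0) (\<beta> - bhat) \<le> 0"
    using risk_eq[OF \<open>0 < m\<close>, of bhat] by linarith
  have gap_inv: "\<forall>i<m. risk_gap (M i) (X i) (N i) (\<beta> - bhat) = risk_gap (M 0) (X 0) (N 0) (\<beta> - bhat)"
  proof (intro allI impI)
    fix i
    assume "i < m"
    then have "risk (M i) (X i) (Y i) bhat = risk (M 0) (X 0) (Y 0) bhat"
      using bhat_inv \<open>0 < m\<close> unfolding invariant_risk_def by blast
    then show "risk_gap (M i) (X i) (N i) (\<beta> - bhat) = risk_gap (M 0) (X 0) (N 0) (\<beta> - bhat)"
      using risk_eq[OF \<open>i < m\<close>, of bhat] risk_eq[OF \<open>0 < m\<close>, of bhat]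
        causal_inv[OF \<open>i < m\<close> \<open>0 < m\<close>]
      by linarith
  qed
  have "\<beta> - bhat = 0"
    by (rule unique[OF gap_nonpos[unfolded risk_gap_def] gap_inv[unfolded risk_gap_def]])
  then show ?thesis
    by simp
qed

end
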